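(* Let $\Omega\subset\mathbb{R}^d$ be open and $H:\overline\Omega\times\mathbb{R}^d\to\mathbb{R}$ be such that for a.e. $x\in\Omega$, $H(x,\cdot)\in C^1(\mathbb{R}^d)$ and $H(x,\cdot)$ is convex, and suppose there is $C>1$ with $|D_pH(x,p)|\le C|p|^{\alpha-1}+C$ and $H(x,0)\le C$ for a.e. $x\in\Omega$ and all $p\in\mathbb{R}^d$, where $\alpha>1$. Consider the conditions, each required for a.e. $x\in\Omega$ and all $p\in\mathbb{R}^d$ with some constant $C>1$: (a) $H(x,p)\ge C^{-1}|p|^\alpha-C$; (b) $D_pH(x,p)\cdot p\ge C^{-1}|p|^\alpha-C$ and $H(x,p)\ge-C$; (c) $-H(x,p)+D_pH(x,p)\cdot p\ge C^{-1}|p|^\alpha-C$ and $H(x,p)\ge-C$. Then (a), (b), (c) are equivalent (with the constant $C$ possibly changing). *)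

theory Defs
  imports "HOL-Analysis.Analysis"
begin

text \<open>H x p is the Hamiltonian; DH x p is its gradient D_p H(x,p) in the p variable.
  "a.e. x in Omega" is with respect to Lebesgue measure.\<close>

definition cond_a :: "'a::euclidean_space set \<Rightarrow> ('a \<Rightarrow> 'a \<Rightarrow> real) \<Rightarrow> real \<Rightarrow> bool" where
  "cond_a \<Omega> H \<alpha> \<longleftrightarrow> (\<exists>C>1. AE x in lebesgue. x \<in> \<Omega> \<longrightarrow>
      (\<forall>p. H x p \<ge> norm p powr \<alpha> / C - C))"

definition cond_b :: "'a::euclidean_space set \<Rightarrow> ('a \<Rightarrow> 'a \<Rightarrow> real) \<Rightarrow> ('a \<Rightarrow> 'a \<Rightarrow> 'a) \<Rightarrow> real \<Rightarrow> bool" where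
  "cond_b \<Omega> H DH \<alpha> \<longleftrightarrow> (\<exists>C>1. AE x in lebesgue. x \<in> \<Omega> \<longrightarrow>
      (\<forall>p. DH x p \<bullet> p \<ge> norm p powr \<alpha> / C - C \<and> H x p \<ge> - C))"

definition cond_c :: "'a::euclidean_space set \<Rightarrow> ('a \<Rightarrow> 'a \<Rightarrow> real) \<Rightarrow> ('a \<Rightarrow> 'a \<Rightarrow> 'a) \<Rightarrow> real \<Rightarrow> bool" where
  "cond_c \<Omega> H DH \<alpha> \<longleftrightarrow> (\<exists>C>1. AE x in lebesgue. x \<in> \<Omega> \<longrightarrow>
      (\<forall>p. - H x p + DH x p \<bullet> p \<ge> norm p powr \<alpha> / C - C \<and> H x p \<ge> - C))"

end

theory Submission
  imports Defs
begin

text \<open>For a.e. \<open>x\<close>, convexity makes \<open>D\<^sub>pH(x,\<cdot>)\<close> a subgradient field: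
  \<open>H(x,q) \<ge> H(x,p) + D\<^sub>pH(x,p)\<cdot>(q - p)\<close>. Taking \<open>q = 0\<close> turns (a) into (b); the
  tangent at \<open>p/2\<close> evaluated at \<open>p\<close> turns (b) back into (a); and (c) implies (b) because
  \<open>H \<ge> -C\<close>. For (a) \<open>\<Longrightarrow>\<close> (c), the tangent at \<open>p\<close> evaluated at \<open>t p\<close> gives
  \<open>(1 - t)(D\<^sub>pH\<cdot>p - H)(x,p) \<ge> t H(x,p) - H(x,t p)\<close>. The growth bound on \<open>D\<^sub>pH\<close> yields
  \<open>H(x,t p) \<le> 2C + 2C t\<^sup>\<alpha> |p|\<^sup>\<alpha>\<close>, and since \<open>\<alpha> > 1\<close>, for small \<open>t\<close> this is
  dominated by half of the term \<open>t |p|\<^sup>\<alpha> / K\<close> that (a), with constant \<open>K\<close>,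
  contributes to \<open>t H(x,p)\<close>.\<close>

lemma convex_on_has_derivative_imp_above_tangent:
  fixes f :: "'a::real_normed_vector \<Rightarrow> real"
  assumes convex: "convex_on UNIV f" and deriv: "(f has_derivative f') (at p)"
  shows "f p + f' (q - p) \<le> f q"
proof -
  define g where "g t = f (p + t *\<^sub>R (q - p))" for t :: real
  have "convex_on UNIV g"
  proof (rule convex_onI)
    fix t x y :: real
    assume t: "0 < t" "t < 1"
    have "p + ((1 - t) * x + t * y) *\<^sub>R (q - p)
        = (1 - t) *\<^sub>R (p + x *\<^sub>R (q - p)) + t *\<^sub>R (p + y *\<^sub>R (q - p))"
      by (simp add: algebra_simps)
    then show "g ((1 - t) *\<^sub>R x + t *\<^sub>R y) \<le> (1 - t) * g x + t * g y"
      using convex_onD[OF convex, of t "p + x *\<^sub>R (q - p)" "p + y *\<^sub>R (q - p)"] t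
      by (simp add: g_def)
  qed simp
  moreover have "(g has_field_derivative f' (q - p)) (at 0)"
  proof -
    have line: "((\<lambda>t. p + t *\<^sub>R (q - p)) has_derivative (\<lambda>t. t *\<^sub>R (q - p))) (at 0)"
      by (auto intro!: derivative_eq_intros)
    have "(g has_derivative (\<lambda>t. f' (t *\<^sub>R (q - p)))) (at 0)"
      using has_derivative_compose[OF line] deriv by (simp add: g_def[abs_def] o_def)
    moreover have "(\<lambda>t. f' (t *\<^sub>R (q - p))) = (*) (f' (q - p))"
      using has_derivative_linear[OF deriv] by (simp add: fun_eq_iff linear_scale)
    ultimately show ?thesis
      by (simp add: has_field_derivative_def)
  qed
  ultimately have "f' (q - p) * (1 - 0) \<le> g 1 - g 0"
    by (intro convex_on_imp_above_tangent) auto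
  then show ?thesis
    by (simp add: g_def)
qed

lemma le_powr_add_one:
  fixes r a :: real
  assumes "0 \<le> r" "1 \<le> a"
  shows "r \<le> r powr a + 1"
proof (cases "r \<le> 1")
  case False
  then have "r powr 1 \<le> r powr a"
    using assms by (intro powr_mono) auto
  then show ?thesis
    using False by simp
qed (simp add: add_increasing)

lemma ex_small_powr_le:
  fixes a c :: real
  assumes "0 < a" "0 < c"
  shows "\<exists>t. 0 < t \<and> t \<le> 1/2 \<and> c * t powr a \<le> 1"
proof -
  define t where "t = min (1/2) ((1 / c) powr (1 / a))"
  have "t powr a \<le> ((1 / c) powr (1 / a)) powr a"
    using assms by (intro powr_mono2) (auto simp: t_def)
  also have "\<dots> = 1 / c"
    using assms by (simp add: powr_powr)
  finally have "c * t powr a \<le> 1"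
    using assms by (simp add: field_simps)
  moreover have "0 < t" "t \<le> 1/2"
    using assms by (auto simp: t_def)
  ultimately show ?thesis
    by blast
qed

lemma divide_diff_le_divide_diff:
  fixes z K K' M :: real
  assumes "0 \<le> z" "0 < K" "K \<le> M" "K' \<le> M"
  shows "z / M - M \<le> z / K - K'"
proof -
  have "z / M \<le> z / K"
    using assms by (intro divide_left_mono) auto
  then show ?thesis
    using assms by linarith
qed

locale subgradient_field =
  fixes h :: "'a::real_inner \<Rightarrow> real" and D :: "'a \<Rightarrow> 'a"
  assumes above_tangent: "h p + D p \<bullet> (q - p) \<le> h q"
begin

lemma diff_zero_le_inner: "h p - h 0 \<le> D p \<bullet> p"
  using above_tangent[of p 0] by simp

lemma above_tangent_scaled:
  "t * h p - h (t *\<^sub>R p) \<le> (1 - t) * (D p \<bullet> p - h p)"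
proof -
  have "D p \<bullet> (t *\<^sub>R p - p) = (t - 1) * (D p \<bullet> p)"
    by (simp add: algebra_simps)
  then show ?thesis
    using above_tangent[of p "t *\<^sub>R p"] by (simp add: algebra_simps)
qed

lemma growth_bound_if_gradient_growth:
  assumes "h 0 \<le> C" "0 \<le> C" "1 \<le> \<alpha>"
    and D_growth: "\<And>p. norm (D p) \<le> C * norm p powr (\<alpha> - 1) + C"
  shows "h p \<le> 2 * C + 2 * C * norm p powr \<alpha>"
proof -
  let ?r = "norm p"
  have "h p \<le> C + D p \<bullet> p"
    using diff_zero_le_inner[of p] \<open>h 0 \<le> C\<close> by linarith
  also have "D p \<bullet> p \<le> norm (D p) * ?r"
    by (rule norm_cauchy_schwarz)
  also have "\<dots> \<le> (C * ?r powr (\<alpha> - 1) + C) * ?r"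
    using D_growth by (intro mult_right_mono) auto
  also have "\<dots> = C * ?r powr \<alpha> + C * ?r"
    by (cases "?r = 0") (simp_all add: algebra_simps powr_mult_base)
  also have "C * ?r \<le> C * (?r powr \<alpha> + 1)"
    using assms by (intro mult_left_mono le_powr_add_one) auto
  finally show ?thesis
    by (simp add: algebra_simps)
qed

lemma gradient_coercive_if_coercive:
  assumes coercive: "\<And>p. norm p powr \<alpha> / K - K \<le> h p"
    and "h 0 \<le> C" "0 < K" "0 \<le> C"
  shows "norm p powr \<alpha> / (K + C) - (K + C) \<le> D p \<bullet> p \<and> - (K + C) \<le> h p"
proof -
  have "- K \<le> h p"
    using coercive[of p] divide_nonneg_pos[OF powr_ge_zero[of "norm p" \<alpha>] \<open>0 < K\<close>] by linarith
  moreover have "norm p powr \<alpha> / (K + C) - (K + C) \<le> norm p powr \<alpha> / K - (K + C)"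
    using assms by (intro divide_diff_le_divide_diff) auto
  ultimately show ?thesis
    using coercive[of p] diff_zero_le_inner[of p] \<open>h 0 \<le> C\<close> \<open>0 \<le> C\<close> by linarith
qed

lemma coercive_if_gradient_coercive:
  assumes gradient_coercive: "\<And>p. norm p powr \<alpha> / K - K \<le> D p \<bullet> p \<and> - K \<le> h p"
    and "0 < K" "1 \<le> \<alpha>"
  shows "norm p powr \<alpha> / (2 powr \<alpha> * K) - 2 powr \<alpha> * K \<le> h p"
proof -
  let ?q = "(1/2) *\<^sub>R p"
  have "p - ?q = ?q"
    using scaleR_add_left[of "1/2" "1/2" p]
    by (metis add_diff_cancel_right' field_sum_of_halves scaleR_one)
  then have "h ?q + D ?q \<bullet> ?q \<le> h p"
    using above_tangent[of ?q p] by simp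
  moreover have "norm ?q powr \<alpha> / K = norm p powr \<alpha> / (2 powr \<alpha> * K)"
    by (simp add: powr_divide)
  ultimately have "norm p powr \<alpha> / (2 powr \<alpha> * K) - 2 * K \<le> h p"
    using gradient_coercive[of ?q] by linarith
  moreover have "2 * K \<le> 2 powr \<alpha> * K"
    using powr_mono[of 1 \<alpha> 2] assms by simp
  ultimately show ?thesis
    by linarith
qed

lemma conjugate_coercive_if_coercive:
  assumes coercive: "\<And>p. norm p powr \<alpha> / K - K \<le> h p"
    and upper: "\<And>p. h p \<le> c + c * norm p powr \<alpha>"
    and "0 < K" "0 \<le> c"
    and t: "0 < t" "t \<le> 1/2" "2 * c * K * t powr (\<alpha> - 1) \<le> 1"
  shows "t * norm p powr \<alpha> / (2 * K) - 2 * (K + c) \<le> D p \<bullet> p - h p"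
proof -
  let ?n = "norm p powr \<alpha>" and ?L = "D p \<bullet> p - h p"
  let ?A = "t * ?n / (2 * K)" and ?B = "K + c"
  have "c * norm (t *\<^sub>R p) powr \<alpha> = (t * ?n) * (c * t powr (\<alpha> - 1))"
    using t by (simp add: powr_mult powr_mult_base powr_diff)
  also have "\<dots> \<le> (t * ?n) * (1 / (2 * K))"
    using t \<open>0 < K\<close> by (intro mult_left_mono) (auto simp: field_simps)
  finally have "h (t *\<^sub>R p) \<le> c + ?A"
    using upper[of "t *\<^sub>R p"] by simp
  moreover have "t * (?n / K - K) \<le> t * h p"
    using coercive[of p] t by (intro mult_left_mono) auto
  moreover have "t * (?n / K - K) = 2 * ?A - t * K"
    using \<open>0 < K\<close> by (simp add: field_simps)
  moreover have "t * K \<le> K"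
    using t \<open>0 < K\<close> by simp
  ultimately have "?A - ?B \<le> (1 - t) * ?L"
    using above_tangent_scaled[of t p] by linarith
  then have "(?A - ?B) / (1 - t) \<le> ?L"
    using t by (simp add: divide_le_eq mult.commute)
  moreover have "?A \<le> ?A / (1 - t)"
    using t \<open>0 < K\<close> by (simp add: le_divide_eq mult_left_le)
  moreover have "?B \<le> 2 * ?B * (1 - t)"
    using t \<open>0 < K\<close> \<open>0 \<le> c\<close> mult_left_mono[of t "1/2" ?B] by (simp add: algebra_simps)
  then have "?B / (1 - t) \<le> 2 * ?B"
    using t by (simp add: divide_le_eq)
  ultimately show ?thesis
    by (simp add: diff_divide_distrib)
qed

end

lemma convex_on_imp_subgradient_field:
  fixes h :: "'a::real_inner \<Rightarrow> real"
  assumes "convex_on UNIV h" "\<And>p. (h has_derivative (\<lambda>v. D p \<bullet> v)) (at p)"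
  shows "subgradient_field h D"
  by unfold_locales (rule convex_on_has_derivative_imp_above_tangent[OF assms])

lemma cond_a_imp_cond_b:
  assumes "AE x in lebesgue. x \<in> \<Omega> \<longrightarrow> subgradient_field (H x) (DH x) \<and> H x 0 \<le> C"
    and "0 \<le> C" and "cond_a \<Omega> H \<alpha>"
  shows "cond_b \<Omega> H DH \<alpha>"
proof -
  obtain K where "K > 1"
    and coercive: "AE x in lebesgue. x \<in> \<Omega> \<longrightarrow> (\<forall>p. norm p powr \<alpha> / K - K \<le> H x p)"
    using \<open>cond_a \<Omega> H \<alpha>\<close> unfolding cond_a_def by blast
  from coercive assms(1) have "AE x in lebesgue. x \<in> \<Omega> \<longrightarrow>
      (\<forall>p. norm p powr \<alpha> / (K + C) - (K + C) \<le> DH x p \<bullet> p \<and> - (K + C) \<le> H x p)"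
  proof (eventually_elim, intro impI allI)
    fix x p
    assume "x \<in> \<Omega>" and elim: "x \<in> \<Omega> \<longrightarrow> (\<forall>p. norm p powr \<alpha> / K - K \<le> H x p)"
      "x \<in> \<Omega> \<longrightarrow> subgradient_field (H x) (DH x) \<and> H x 0 \<le> C"
    then interpret subgradient_field "H x" "DH x"
      by simp
    show "norm p powr \<alpha> / (K + C) - (K + C) \<le> DH x p \<bullet> p \<and> - (K + C) \<le> H x p"
      using elim \<open>x \<in> \<Omega>\<close> \<open>K > 1\<close> \<open>0 \<le> C\<close> by (intro gradient_coercive_if_coercive) auto
  qed
  moreover have "K + C > 1"
    using \<open>K > 1\<close> \<open>0 \<le> C\<close> by simp
  ultimately show ?thesis
    unfolding cond_b_def by blast
qed

lemma cond_b_imp_cond_a: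
  assumes "AE x in lebesgue. x \<in> \<Omega> \<longrightarrow> subgradient_field (H x) (DH x)"
    and "1 \<le> \<alpha>" and "cond_b \<Omega> H DH \<alpha>"
  shows "cond_a \<Omega> H \<alpha>"
proof -
  obtain K where "K > 1" and gradient_coercive: "AE x in lebesgue. x \<in> \<Omega> \<longrightarrow>
      (\<forall>p. norm p powr \<alpha> / K - K \<le> DH x p \<bullet> p \<and> - K \<le> H x p)"
    using \<open>cond_b \<Omega> H DH \<alpha>\<close> unfolding cond_b_def by blast
  from gradient_coercive assms(1) have "AE x in lebesgue. x \<in> \<Omega> \<longrightarrow>
      (\<forall>p. norm p powr \<alpha> / (2 powr \<alpha> * K) - 2 powr \<alpha> * K \<le> H x p)"
  proof (eventually_elim, intro impI allI)
    fix x p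
    assume "x \<in> \<Omega>" and elim: "x \<in> \<Omega> \<longrightarrow>
        (\<forall>p. norm p powr \<alpha> / K - K \<le> DH x p \<bullet> p \<and> - K \<le> H x p)"
      "x \<in> \<Omega> \<longrightarrow> subgradient_field (H x) (DH x)"
    then interpret subgradient_field "H x" "DH x"
      by simp
    show "norm p powr \<alpha> / (2 powr \<alpha> * K) - 2 powr \<alpha> * K \<le> H x p"
      using elim \<open>x \<in> \<Omega>\<close> \<open>K > 1\<close> \<open>1 \<le> \<alpha>\<close> by (intro coercive_if_gradient_coercive) auto
  qed
  moreover have "2 powr \<alpha> * K > 1"
    using \<open>K > 1\<close> \<open>1 \<le> \<alpha>\<close> by (simp add: less_1_mult)
  ultimately show ?thesis
    unfolding cond_a_def by blast
qed

lemma cond_c_imp_cond_b: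
  assumes "cond_c \<Omega> H DH \<alpha>"
  shows "cond_b \<Omega> H DH \<alpha>"
proof -
  obtain K where "K > 1" and conjugate_coercive: "AE x in lebesgue. x \<in> \<Omega> \<longrightarrow>
      (\<forall>p. norm p powr \<alpha> / K - K \<le> - H x p + DH x p \<bullet> p \<and> - K \<le> H x p)"
    using assms unfolding cond_c_def by blast
  have weaken: "norm p powr \<alpha> / (2 * K) - 2 * K \<le> norm p powr \<alpha> / K - 2 * K" for p :: 'a
    using \<open>K > 1\<close> by (intro divide_diff_le_divide_diff) auto
  from conjugate_coercive have "AE x in lebesgue. x \<in> \<Omega> \<longrightarrow>
      (\<forall>p. norm p powr \<alpha> / (2 * K) - 2 * K \<le> DH x p \<bullet> p \<and> - (2 * K) \<le> H x p)"
  proof (eventually_elim, intro impI allI)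
    fix x p
    assume "x \<in> \<Omega>" and "x \<in> \<Omega> \<longrightarrow>
        (\<forall>p. norm p powr \<alpha> / K - K \<le> - H x p + DH x p \<bullet> p \<and> - K \<le> H x p)"
    then have "norm p powr \<alpha> / K - K \<le> - H x p + DH x p \<bullet> p" "- K \<le> H x p"
      by auto
    then show "norm p powr \<alpha> / (2 * K) - 2 * K \<le> DH x p \<bullet> p \<and> - (2 * K) \<le> H x p"
      using weaken[of p] \<open>K > 1\<close> by linarith
  qed
  moreover have "2 * K > 1"
    using \<open>K > 1\<close> by simp
  ultimately show ?thesis
    unfolding cond_b_def by blast
qed

lemma cond_a_imp_cond_c:
  assumes bounds: "AE x in lebesgue. x \<in> \<Omega> \<longrightarrow> subgradient_field (H x) (DH x) \<and> H x 0 \<le> C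
      \<and> (\<forall>p. norm (DH x p) \<le> C * norm p powr (\<alpha> - 1) + C)"
    and "0 < C" "1 < \<alpha>" "cond_a \<Omega> H \<alpha>"
  shows "cond_c \<Omega> H DH \<alpha>"
proof -
  obtain K where "K > 1"
    and coercive: "AE x in lebesgue. x \<in> \<Omega> \<longrightarrow> (\<forall>p. norm p powr \<alpha> / K - K \<le> H x p)"
    using \<open>cond_a \<Omega> H \<alpha>\<close> unfolding cond_a_def by blast
  obtain t where t: "0 < t" "t \<le> 1/2" "2 * (2 * C) * K * t powr (\<alpha> - 1) \<le> 1"
    using ex_small_powr_le[of "\<alpha> - 1" "2 * (2 * C) * K"] assms \<open>K > 1\<close> by auto
  define M where "M = 2 * K / t + 2 * (K + 2 * C)"
  have "0 < 2 * K / t"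
    using t \<open>K > 1\<close> by simp
  then have "K \<le> M" "1 < M"
    using \<open>K > 1\<close> \<open>0 < C\<close> by (auto simp: M_def)
  have weaken: "norm p powr \<alpha> / M - M \<le> t * norm p powr \<alpha> / (2 * K) - 2 * (K + 2 * C)"
    for p :: 'a
    using divide_diff_le_divide_diff[of "norm p powr \<alpha>" "2 * K / t" M "2 * (K + 2 * C)"]
      t \<open>K > 1\<close> \<open>0 < C\<close> by (simp add: M_def ac_simps)
  from coercive bounds have "AE x in lebesgue. x \<in> \<Omega> \<longrightarrow>
      (\<forall>p. norm p powr \<alpha> / M - M \<le> - H x p + DH x p \<bullet> p \<and> - M \<le> H x p)"
  proof (eventually_elim, intro impI allI)
    fix x and p :: 'a
    assume "x \<in> \<Omega>" and elim: "x \<in> \<Omega> \<longrightarrow> (\<forall>p. norm p powr \<alpha> / K - K \<le> H x p)"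
      "x \<in> \<Omega> \<longrightarrow> subgradient_field (H x) (DH x) \<and> H x 0 \<le> C
        \<and> (\<forall>p. norm (DH x p) \<le> C * norm p powr (\<alpha> - 1) + C)"
    then interpret subgradient_field "H x" "DH x"
      by simp
    have coercive_x: "norm q powr \<alpha> / K - K \<le> H x q" for q
      using elim \<open>x \<in> \<Omega>\<close> by simp
    have "0 \<le> norm p powr \<alpha> / K"
      using \<open>K > 1\<close> by simp
    with coercive_x[of p] have "- K \<le> H x p"
      by linarith
    moreover have "H x q \<le> 2 * C + 2 * C * norm q powr \<alpha>" for q
      using elim \<open>x \<in> \<Omega>\<close> \<open>0 < C\<close> \<open>1 < \<alpha>\<close> by (intro growth_bound_if_gradient_growth) auto
    then have "t * norm p powr \<alpha> / (2 * K) - 2 * (K + 2 * C) \<le> DH x p \<bullet> p - H x p"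
      using coercive_x t \<open>K > 1\<close> \<open>0 < C\<close> by (intro conjugate_coercive_if_coercive) auto
    ultimately show "norm p powr \<alpha> / M - M \<le> - H x p + DH x p \<bullet> p \<and> - M \<le> H x p"
      using weaken[of p] \<open>K \<le> M\<close> by linarith
  qed
  with \<open>1 < M\<close> show ?thesis
    unfolding cond_c_def by blast
qed

theorem proposition2p2:
  fixes \<Omega> :: "'a::euclidean_space set"
    and H :: "'a \<Rightarrow> 'a \<Rightarrow> real"
    and DH :: "'a \<Rightarrow> 'a \<Rightarrow> 'a"
    and \<alpha> C :: real
  assumes "open \<Omega>"
    and "\<alpha> > 1"
    and "AE x in lebesgue. x \<in> \<Omega> \<longrightarrow>
           (\<forall>p. (H x has_derivative (\<lambda>v. DH x p \<bullet> v)) (at p))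
         \<and> continuous_on UNIV (DH x)
         \<and> convex_on UNIV (H x)"
    and "C > 1"
    and "AE x in lebesgue. x \<in> \<Omega> \<longrightarrow>
           (\<forall>p. norm (DH x p) \<le> C * norm p powr (\<alpha> - 1) + C) \<and> H x 0 \<le> C"
  shows "(cond_a \<Omega> H \<alpha> \<longleftrightarrow> cond_b \<Omega> H DH \<alpha>) \<and> (cond_b \<Omega> H DH \<alpha> \<longleftrightarrow> cond_c \<Omega> H DH \<alpha>)"
proof -
  from assms(3,5) have bounds: "AE x in lebesgue. x \<in> \<Omega> \<longrightarrow>
      subgradient_field (H x) (DH x) \<and> H x 0 \<le> C
      \<and> (\<forall>p. norm (DH x p) \<le> C * norm p powr (\<alpha> - 1) + C)"
    by eventually_elim (simp add: convex_on_imp_subgradient_field)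
  then have subgradient: "AE x in lebesgue. x \<in> \<Omega> \<longrightarrow> subgradient_field (H x) (DH x)"
    and subgradient_C: "AE x in lebesgue. x \<in> \<Omega> \<longrightarrow> subgradient_field (H x) (DH x) \<and> H x 0 \<le> C"
    by (auto elim: eventually_mono)
  show ?thesis
  proof (intro conjI iffI)
    show "cond_b \<Omega> H DH \<alpha>" if "cond_a \<Omega> H \<alpha>"
      using cond_a_imp_cond_b[OF subgradient_C _ that] assms(4) by simp
    show "cond_a \<Omega> H \<alpha>" if "cond_b \<Omega> H DH \<alpha>"
      using cond_b_imp_cond_a[OF subgradient _ that] assms(2) by simp
    show "cond_c \<Omega> H DH \<alpha>" if "cond_b \<Omega> H DH \<alpha>"
      using cond_a_imp_cond_c[OF bounds _ _ cond_b_imp_cond_a[OF subgradient _ that]] assms(2,4)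
      by simp
    show "cond_b \<Omega> H DH \<alpha>" if "cond_c \<Omega> H DH \<alpha>"
      using cond_c_imp_cond_b[OF that] .
  qed
qed

end
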